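(* Let $H\in\mathbb{R}^{\ell\times\ell}$ be symmetric, $0\neq g_0\in\mathbb{R}^{\ell}$ and $\gamma>0$. Consider the quadratic eigenvalue problem (QEP) $(H-\lambda I)^2w=\gamma^{-2}g_0g_0^{\top}w$, where an eigenvalue is a $\lambda\in\mathbb{C}$ for which there is a nonzero $w\in\mathbb{C}^{\ell}$ satisfying this equation. Then the leftmost eigenvalue of this QEP (the one with the smallest real part) is real. As a consequence, the optimal value $\lambda_*$ of the problem pQEPmin — minimize $\lambda$ over $\lambda\in\mathbb{R}$ and $0\ne w\in\mathbb{R}^\ell$ with $(H-\lambda I)^2w=\gamma^{-2}g_0g_0^{\top}w$ — is the leftmost eigenvalue of this QEP. *)

theory Defs
  imports "HOL-Analysis.Analysis"
begin

definition cmat :: "real^'n^'m \<Rightarrow> complex^'n^'m" where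
  "cmat A = (\<chi> i j. complex_of_real (A$i$j))"

definition outer :: "real^'n \<Rightarrow> real^'n^'n" where
  "outer g = (\<chi> i j. g$i * g$j)"

definition qep_eigenvalue :: "real^'n^'n \<Rightarrow> real^'n \<Rightarrow> real \<Rightarrow> complex \<Rightarrow> bool" where
  "qep_eigenvalue H g \<gamma> lam \<longleftrightarrow>
     (\<exists>w::complex^'n. w \<noteq> 0 \<and>
        ((cmat H - mat lam) ** (cmat H - mat lam)) *v w
          = complex_of_real (1 / \<gamma>^2) *s (cmat (outer g) *v w))"

definition pqep_feasible :: "real^'n^'n \<Rightarrow> real^'n \<Rightarrow> real \<Rightarrow> real \<Rightarrow> bool" where
  "pqep_feasible H g \<gamma> lam \<longleftrightarrow>
     (\<exists>w::real^'n. w \<noteq> 0 \<and>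
        ((H - mat lam) ** (H - mat lam)) *v w = (1 / \<gamma>^2) *s (outer g *v w))"

end

theory Submission
  imports Defs
begin

text \<open>
  Write A(l) = H - l I and M(l) = A(l)^2 - c g0 g0^T with c = 1/gamma^2, so that the real
  eigenvalues of the QEP are the l with M(l) singular. Let l* be the largest l for which A(l)
  and M(l) are both positive semidefinite: the set of such l is nonempty, closed and bounded
  above, and M(l*) is singular, since otherwise both matrices would be positive definite and l*
  could be increased. So l* is a real eigenvalue. The expansion
  M(t) = M(l*) + 2 (l* - t) A(l*) + (l* - t)^2 I shows that M(t) is positive definite for t < l*.
  For an eigenpair (alpha + i beta, u + i v), the real and imaginary parts of the equation give
  u M(alpha) u + v M(alpha) v = beta^2 (|u|^2 + |v|^2) and beta (u A(alpha) u + v A(alpha) v) = 0.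
  If beta = 0 the first identity rules out alpha < l*. If beta \<noteq> 0 the second one yields
  alpha \<ge> l*, and alpha = l* is impossible: then A(l*) u = A(l*) v = 0, which makes the left
  side of the first identity nonpositive.
\<close>

section \<open>Symmetric and positive semidefinite matrices\<close>

lemma matrix_vector_mul_mat: "(mat c :: 'a::semiring_1^'n^'n) *v x = c *s x"
  by (simp add: vec_eq_iff matrix_vector_mult_def mat_def if_distrib if_distribR cong: if_cong)

lemma outer_mulv: "outer g *v x = (g \<bullet> x) *\<^sub>R g"
  by (simp add: vec_eq_iff matrix_vector_mult_def outer_def inner_vec_def sum_distrib_left algebra_simps)

lemma transpose_outer: "transpose (outer g) = outer g"
  by (simp add: vec_eq_iff transpose_def outer_def mult.commute)

lemma transpose_diff: "transpose (A - B :: 'a::ring_1^'n^'n) = transpose A - transpose B"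
  by (simp add: vec_eq_iff transpose_def)

lemma symmetric_inner_mulv:
  fixes S :: "real^'n^'n"
  assumes "transpose S = S"
  shows "(S *v x) \<bullet> y = x \<bullet> (S *v y)"
  by (metis assms dot_lmul_matrix inner_commute vector_transpose_matrix)

definition psd :: "real^'n^'n \<Rightarrow> bool" where
  "psd S \<longleftrightarrow> (\<forall>x. 0 \<le> x \<bullet> (S *v x))"

lemma psd_form_eq_0_imp_mulv_eq_0:
  fixes S :: "real^'n^'n"
  assumes sym: "transpose S = S" and "psd S" and x: "x \<bullet> (S *v x) = 0"
  shows "S *v x = 0"
proof (rule ccontr)
  assume "S *v x \<noteq> 0"
  define z where "z = S *v x"
  have zz: "z \<bullet> z > 0" using \<open>S *v x \<noteq> 0\<close> z_def by simp
  have q: "0 \<le> z \<bullet> (S *v z)" using \<open>psd S\<close> by (simp add: psd_def)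
  have expand: "(x - t *\<^sub>R z) \<bullet> (S *v (x - t *\<^sub>R z)) = t * (t * (z \<bullet> (S *v z)) - 2 * (z \<bullet> z))" for t
    using x symmetric_inner_mulv[OF sym, of x z]
    by (simp add: z_def matrix_vector_mult_diff_distrib matrix_vector_mult_scaleR
        inner_diff_left inner_diff_right inner_commute algebra_simps)
  define t where "t = (z \<bullet> z) / (z \<bullet> (S *v z) + 1)"
  have "t > 0" using zz q t_def by simp
  have "t * (z \<bullet> (S *v z)) \<le> t * (z \<bullet> (S *v z) + 1)" using \<open>t > 0\<close> by simp
  also have "\<dots> = z \<bullet> z" using q t_def by simp
  finally have "t * (z \<bullet> (S *v z)) - 2 * (z \<bullet> z) < 0" using zz by linarith
  hence "t * (t * (z \<bullet> (S *v z)) - 2 * (z \<bullet> z)) < 0"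
    using \<open>t > 0\<close> by (simp add: mult_pos_neg)
  with \<open>psd S\<close> show False by (metis expand psd_def not_le)
qed

lemma psd_injective_imp_coercive:
  fixes S :: "real^'n^'n"
  assumes sym: "transpose S = S" and "psd S" and inj: "\<And>x. S *v x = 0 \<Longrightarrow> x = 0"
  obtains \<delta> where "\<delta> > 0" "\<And>x. \<delta> * (x \<bullet> x) \<le> x \<bullet> (S *v x)"
proof -
  have "continuous_on (sphere 0 1) (\<lambda>x::real^'n. x \<bullet> (S *v x))"
    by (intro continuous_intros linear_continuous_on matrix_vector_mul_linear_gen)
  moreover have "sphere (0::real^'n) 1 \<noteq> {}"
    by (metis norm_axis_1 mem_sphere_0 empty_iff)
  ultimately obtain x0 where x0: "x0 \<in> sphere 0 1"
    and min: "\<And>y. y \<in> sphere 0 1 \<Longrightarrow> x0 \<bullet> (S *v x0) \<le> y \<bullet> (S *v y)"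
    using continuous_attains_inf[OF compact_sphere] by blast
  define \<delta> where "\<delta> = x0 \<bullet> (S *v x0)"
  have "S *v x0 \<noteq> 0" using x0 inj by fastforce
  hence "\<delta> \<noteq> 0" using psd_form_eq_0_imp_mulv_eq_0[OF sym \<open>psd S\<close>] \<delta>_def by metis
  hence "\<delta> > 0" using \<open>psd S\<close> \<delta>_def by (simp add: psd_def order_less_le)
  moreover have "\<delta> * (x \<bullet> x) \<le> x \<bullet> (S *v x)" for x
  proof (cases "x = 0")
    case False
    define u where "u = (1 / norm x) *\<^sub>R x"
    have "u \<in> sphere 0 1" using False u_def by simp
    hence "\<delta> \<le> u \<bullet> (S *v u)" using min \<delta>_def by blast
    also have "u \<bullet> (S *v u) = (x \<bullet> (S *v x)) / (norm x)\<^sup>2"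
      by (simp add: u_def matrix_vector_mult_scaleR power2_eq_square)
    finally show ?thesis using False by (simp add: pos_le_divide_eq power2_norm_eq_inner)
  qed simp
  ultimately show ?thesis using that by blast
qed

lemma matrix_vector_mul_bounds:
  fixes S :: "real^'n^'n"
  obtains K where "K > 0" "\<And>x. norm (S *v x) \<le> K * norm x" "\<And>x. \<bar>x \<bullet> (S *v x)\<bar> \<le> K * (x \<bullet> x)"
proof -
  obtain K where K: "K > 0" "\<And>x. norm (S *v x) \<le> norm x * K"
    using bounded_linear.pos_bounded[OF matrix_vector_mul_bounded_linear[of S]] by blast
  have "\<bar>x \<bullet> (S *v x)\<bar> \<le> K * (x \<bullet> x)" for x
  proof -
    have "\<bar>x \<bullet> (S *v x)\<bar> \<le> norm x * norm (S *v x)" by (rule Cauchy_Schwarz_ineq2)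
    also have "\<dots> \<le> norm x * (norm x * K)" using K(2)[of x] by (simp add: mult_left_mono)
    finally show ?thesis by (simp add: power2_norm_eq_inner[symmetric] power2_eq_square mult_ac)
  qed
  with K that show ?thesis by (simp add: mult.commute)
qed

definition shifted :: "real^'n^'n \<Rightarrow> real \<Rightarrow> real^'n^'n" where
  "shifted H l = H - mat l"

definition qep_matrix :: "real^'n^'n \<Rightarrow> real^'n \<Rightarrow> real \<Rightarrow> real \<Rightarrow> real^'n^'n" where
  "qep_matrix H g c l = shifted H l ** shifted H l - c *\<^sub>R outer g"

lemma shifted_mulv: "shifted H l *v x = H *v x - l *\<^sub>R x"
  by (simp add: shifted_def matrix_vector_mult_diff_rdistrib matrix_vector_mul_mat scalar_mult_eq_scaleR)

lemma inner_shifted: "x \<bullet> (shifted H l *v x) = x \<bullet> (H *v x) - l * (x \<bullet> x)"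
  by (simp add: shifted_mulv inner_diff_right)

lemma transpose_shifted: "transpose H = H \<Longrightarrow> transpose (shifted H l) = shifted H l"
  by (simp add: shifted_def transpose_diff)

lemma qep_matrix_mulv:
  "qep_matrix H g c l *v x = shifted H l *v (shifted H l *v x) - (c * (g \<bullet> x)) *\<^sub>R g"
  by (simp add: qep_matrix_def matrix_vector_mult_diff_rdistrib scaleR_matrix_vector_assoc[symmetric]
      outer_mulv matrix_vector_mul_assoc)

lemma transpose_qep_matrix: "transpose H = H \<Longrightarrow> transpose (qep_matrix H g c l) = qep_matrix H g c l"
  by (simp add: qep_matrix_def transpose_diff transpose_shifted matrix_transpose_mul transpose_scalar
      transpose_outer)

lemma inner_qep_matrix:
  assumes "transpose H = H"
  shows "x \<bullet> (qep_matrix H g c l *v x) = (shifted H l *v x) \<bullet> (shifted H l *v x) - c * (g \<bullet> x)\<^sup>2"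
  using symmetric_inner_mulv[OF transpose_shifted[OF assms], of l x "shifted H l *v x"]
  by (simp add: qep_matrix_mulv inner_diff_right power2_eq_square inner_commute)

lemma inner_qep_matrix_shift:
  assumes "transpose H = H"
  shows "x \<bullet> (qep_matrix H g c t *v x)
    = x \<bullet> (qep_matrix H g c l *v x) + 2 * (l - t) * (x \<bullet> (shifted H l *v x)) + (l - t)\<^sup>2 * (x \<bullet> x)"
  using symmetric_inner_mulv[OF assms, of x x]
  by (simp add: inner_qep_matrix[OF assms] shifted_mulv inner_diff_left inner_diff_right
      power2_eq_square algebra_simps)

lemma psd_qep_matrix_below:
  assumes "transpose H = H" and "psd (shifted H l)" and "psd (qep_matrix H g c l)" and "t \<le> l"
  shows "(l - t)\<^sup>2 * (x \<bullet> x) \<le> x \<bullet> (qep_matrix H g c t *v x)"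
proof -
  have "0 \<le> x \<bullet> (qep_matrix H g c l *v x)" "0 \<le> x \<bullet> (shifted H l *v x)"
    using assms(2,3) by (simp_all add: psd_def)
  with \<open>t \<le> l\<close> show ?thesis unfolding inner_qep_matrix_shift[OF assms(1), of x g c t l] by simp
qed

section \<open>The largest point of the positive semidefinite region\<close>

lemma bdd_above_psd_shifted:
  fixes H :: "real^'n^'n"
  shows "bdd_above {l. psd (shifted H l)}"
proof
  fix l assume "l \<in> {l. psd (shifted H l)}"
  define x :: "real^'n" where "x = axis undefined 1"
  have "0 \<le> x \<bullet> (shifted H l *v x)" using \<open>l \<in> _\<close> by (simp add: psd_def)
  moreover have "x \<bullet> x = 1" by (simp add: x_def inner_axis_axis)
  ultimately show "l \<le> x \<bullet> (H *v x)" by (simp add: inner_shifted)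
qed

lemma closed_psd_pencil:
  assumes "transpose H = H"
  shows "closed {l. psd (shifted H l) \<and> psd (qep_matrix H g c l)}"
proof -
  have shift: "x \<bullet> (qep_matrix H g c l *v x)
      = x \<bullet> (qep_matrix H g c 0 *v x) - 2 * l * (x \<bullet> (H *v x)) + l\<^sup>2 * (x \<bullet> x)" for x l
    using inner_qep_matrix_shift[OF assms, of x g c l 0] by (simp add: inner_shifted)
  show ?thesis
    unfolding psd_def inner_shifted
    by (subst shift) (intro closed_Collect_all closed_Collect_conj allI closed_Collect_le continuous_intros)
qed

lemma psd_pencil_far_left:
  assumes "transpose H = H" and "0 \<le> c"
  obtains l where "psd (shifted H l)" "psd (qep_matrix H g c l)"
proof -
  obtain K where K: "K > 0" "\<And>x. norm (H *v x) \<le> K * norm x"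
    using matrix_vector_mul_bounds[of H] by blast
  define R where "R = c * (g \<bullet> g) + 1"
  have "R \<ge> 1" using \<open>0 \<le> c\<close> by (simp add: R_def)
  define l where "l = - (K + R)"
  have lower: "R * norm x \<le> norm (shifted H l *v x)" for x
  proof -
    have "(K + R) * norm x = norm (l *\<^sub>R x)" using K(1) \<open>R \<ge> 1\<close> by (simp add: l_def)
    also have "\<dots> \<le> norm (H *v x) + norm (shifted H l *v x)"
      using norm_triangle_ineq4[of "H *v x" "shifted H l *v x"] by (simp add: shifted_mulv)
    finally show ?thesis using K(2)[of x] by (simp add: distrib_right)
  qed
  have "psd (shifted H l)"
    unfolding psd_def
  proof
    fix x
    have "- (x \<bullet> (H *v x)) \<le> norm x * norm (H *v x)"
      using Cauchy_Schwarz_ineq2[of x "H *v x"] by linarith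
    also have "\<dots> \<le> norm x * (K * norm x)" using K(2)[of x] by (simp add: mult_left_mono)
    also have "\<dots> = K * (x \<bullet> x)" by (simp add: power2_norm_eq_inner[symmetric] power2_eq_square)
    also have "\<dots> \<le> (K + R) * (x \<bullet> x)" using \<open>R \<ge> 1\<close> by (simp add: mult_right_mono)
    finally show "0 \<le> x \<bullet> (shifted H l *v x)" by (simp add: inner_shifted l_def algebra_simps)
  qed
  moreover have "psd (qep_matrix H g c l)"
    unfolding psd_def
  proof
    fix x
    have "c * (g \<bullet> x)\<^sup>2 \<le> c * ((g \<bullet> g) * (x \<bullet> x))"
      using Cauchy_Schwarz_ineq[of g x] \<open>0 \<le> c\<close> by (simp add: mult_left_mono)
    also have "\<dots> \<le> R * (x \<bullet> x)" by (simp add: R_def distrib_right mult.assoc)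
    also have "\<dots> \<le> R\<^sup>2 * (x \<bullet> x)"
      using \<open>R \<ge> 1\<close> by (intro mult_right_mono) (auto simp: power2_eq_square)
    also have "\<dots> = (R * norm x)\<^sup>2" by (simp add: power_mult_distrib power2_norm_eq_inner)
    also have "\<dots> \<le> (norm (shifted H l *v x))\<^sup>2"
      using lower[of x] \<open>R \<ge> 1\<close> by (intro power_mono) auto
    finally show "0 \<le> x \<bullet> (qep_matrix H g c l *v x)"
      unfolding inner_qep_matrix[OF assms(1)] power2_norm_eq_inner by simp
  qed
  ultimately show ?thesis using that by blast
qed

lemma psd_pencil_extend:
  fixes H :: "real^'n^'n"
  assumes sym: "transpose H = H" and "0 \<le> c"
    and psdA: "psd (shifted H l)" and psdM: "psd (qep_matrix H g c l)"
    and inj: "\<And>x. qep_matrix H g c l *v x = 0 \<Longrightarrow> x = 0"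
  obtains e where "e > 0" "psd (shifted H (l + e))" "psd (qep_matrix H g c (l + e))"
proof -
  have injA: "x = 0" if "shifted H l *v x = 0" for x
  proof -
    have "0 \<le> x \<bullet> (qep_matrix H g c l *v x)" using psdM by (simp add: psd_def)
    hence "c * (g \<bullet> x)\<^sup>2 \<le> 0" by (simp add: inner_qep_matrix[OF sym] that)
    moreover have "0 \<le> c * (g \<bullet> x)\<^sup>2" using \<open>0 \<le> c\<close> by simp
    ultimately have "c * (g \<bullet> x)\<^sup>2 = 0" by linarith
    hence "c * (g \<bullet> x) = 0" by simp
    hence "qep_matrix H g c l *v x = 0" by (simp add: qep_matrix_mulv that)
    thus ?thesis by (rule inj)
  qed
  obtain d1 where d1: "d1 > 0" "\<And>x. d1 * (x \<bullet> x) \<le> x \<bullet> (shifted H l *v x)"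
    using psd_injective_imp_coercive[OF transpose_shifted[OF sym] psdA injA] by blast
  obtain d2 where d2: "d2 > 0" "\<And>x. d2 * (x \<bullet> x) \<le> x \<bullet> (qep_matrix H g c l *v x)"
    using psd_injective_imp_coercive[OF transpose_qep_matrix[OF sym] psdM inj] by blast
  obtain K where K: "K > 0" "\<And>x. \<bar>x \<bullet> (shifted H l *v x)\<bar> \<le> K * (x \<bullet> x)"
    using matrix_vector_mul_bounds[of "shifted H l"] by blast
  define e where "e = min d1 (d2 / (2 * K))"
  have e: "e > 0" "e \<le> d1" "2 * e * K \<le> d2"
    using d1 d2 K by (auto simp: e_def min_def field_simps)
  have "psd (shifted H (l + e))"
    unfolding psd_def
  proof
    fix x :: "real^'n"
    have "e * (x \<bullet> x) \<le> d1 * (x \<bullet> x)" using e by (simp add: mult_right_mono)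
    with d1(2)[of x] show "0 \<le> x \<bullet> (shifted H (l + e) *v x)"
      by (simp add: inner_shifted algebra_simps)
  qed
  moreover have "psd (qep_matrix H g c (l + e))"
    unfolding psd_def
  proof
    fix x :: "real^'n"
    have "2 * e * (x \<bullet> (shifted H l *v x)) \<le> 2 * e * (K * (x \<bullet> x))"
      using K(2)[of x] \<open>e > 0\<close> by simp
    also have "\<dots> \<le> d2 * (x \<bullet> x)"
      using e(3) by (simp add: mult_right_mono mult.assoc[symmetric])
    finally have "2 * e * (x \<bullet> (shifted H l *v x)) \<le> x \<bullet> (qep_matrix H g c l *v x)"
      using d2(2)[of x] by linarith
    then show "0 \<le> x \<bullet> (qep_matrix H g c (l + e) *v x)"
      by (simp add: inner_qep_matrix_shift[OF sym, of x g c "l + e" l])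
  qed
  ultimately show ?thesis using e(1) that by blast
qed

lemma exists_singular_psd_pencil:
  fixes H :: "real^'n^'n"
  assumes sym: "transpose H = H" and "0 \<le> c"
  obtains l w where "psd (shifted H l)" "psd (qep_matrix H g c l)"
    "w \<noteq> 0" "qep_matrix H g c l *v w = 0"
proof -
  define T where "T = {l. psd (shifted H l) \<and> psd (qep_matrix H g c l)}"
  have "T \<noteq> {}" unfolding T_def using psd_pencil_far_left[OF assms] by blast
  moreover have "bdd_above T"
    using bdd_above_psd_shifted[of H] by (rule bdd_above_mono) (auto simp: T_def)
  moreover have "closed T" unfolding T_def by (rule closed_psd_pencil[OF sym])
  ultimately have "Sup T \<in> T" by (rule closed_contains_Sup)
  hence psd: "psd (shifted H (Sup T))" "psd (qep_matrix H g c (Sup T))" by (auto simp: T_def)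
  have "\<exists>w. w \<noteq> 0 \<and> qep_matrix H g c (Sup T) *v w = 0"
  proof (rule ccontr)
    assume "\<not> ?thesis"
    then have inj: "x = 0" if "qep_matrix H g c (Sup T) *v x = 0" for x
      using that by blast
    obtain e where "e > 0" "Sup T + e \<in> T"
      using psd_pencil_extend[OF sym \<open>0 \<le> c\<close> psd inj] by (auto simp: T_def)
    with cSup_upper[OF _ \<open>bdd_above T\<close>] show False by fastforce
  qed
  with psd that show ?thesis by blast
qed

section \<open>Complex eigenpairs\<close>

definition Re_vec :: "complex^'n \<Rightarrow> real^'n" where
  "Re_vec w = (\<chi> i. Re (w $ i))"

definition Im_vec :: "complex^'n \<Rightarrow> real^'n" where
  "Im_vec w = (\<chi> i. Im (w $ i))"

lemma complex_vec_eq_iff: "z = w \<longleftrightarrow> Re_vec z = Re_vec w \<and> Im_vec z = Im_vec w"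
  by (auto simp: vec_eq_iff Re_vec_def Im_vec_def complex_eq_iff)

lemma Re_vec_cmat_mulv: "Re_vec (cmat S *v w) = S *v Re_vec w"
  by (simp add: vec_eq_iff Re_vec_def matrix_vector_mult_def cmat_def Re_sum)

lemma Im_vec_cmat_mulv: "Im_vec (cmat S *v w) = S *v Im_vec w"
  by (simp add: vec_eq_iff Im_vec_def matrix_vector_mult_def cmat_def Im_sum)

lemma Re_vec_shifted_mulv:
  "Re_vec ((cmat H - mat \<mu>) *v w) = shifted H (Re \<mu>) *v Re_vec w + Im \<mu> *\<^sub>R Im_vec w"
proof -
  have "Re_vec ((cmat H - mat \<mu>) *v w) = Re_vec (cmat H *v w) - Re \<mu> *\<^sub>R Re_vec w + Im \<mu> *\<^sub>R Im_vec w"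
    by (simp add: matrix_vector_mult_diff_rdistrib matrix_vector_mul_mat vec_eq_iff Re_vec_def Im_vec_def)
  then show ?thesis by (simp add: Re_vec_cmat_mulv shifted_mulv)
qed

lemma Im_vec_shifted_mulv:
  "Im_vec ((cmat H - mat \<mu>) *v w) = shifted H (Re \<mu>) *v Im_vec w - Im \<mu> *\<^sub>R Re_vec w"
proof -
  have "Im_vec ((cmat H - mat \<mu>) *v w) = Im_vec (cmat H *v w) - Re \<mu> *\<^sub>R Im_vec w - Im \<mu> *\<^sub>R Re_vec w"
    by (simp add: matrix_vector_mult_diff_rdistrib matrix_vector_mul_mat vec_eq_iff Re_vec_def Im_vec_def)
  then show ?thesis by (simp add: Im_vec_cmat_mulv shifted_mulv)
qed

lemma qep_equation_iff:
  fixes H :: "real^'n^'n" and \<mu> :: complex and w :: "complex^'n"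
  defines "A \<equiv> shifted H (Re \<mu>)" and "\<beta> \<equiv> Im \<mu>" and "u \<equiv> Re_vec w" and "v \<equiv> Im_vec w"
  shows "((cmat H - mat \<mu>) ** (cmat H - mat \<mu>)) *v w = complex_of_real c *s (cmat (outer g) *v w)
    \<longleftrightarrow> A *v (A *v u) + (2 * \<beta>) *\<^sub>R (A *v v) - \<beta>\<^sup>2 *\<^sub>R u = (c * (g \<bullet> u)) *\<^sub>R g
      \<and> A *v (A *v v) - (2 * \<beta>) *\<^sub>R (A *v u) - \<beta>\<^sup>2 *\<^sub>R v = (c * (g \<bullet> v)) *\<^sub>R g"
proof -
  have smult: "Re_vec (complex_of_real c *s z) = c *\<^sub>R Re_vec z" "Im_vec (complex_of_real c *s z) = c *\<^sub>R Im_vec z"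
    for z :: "complex^'n"
    by (simp_all add: vec_eq_iff Re_vec_def Im_vec_def)
  show ?thesis
    unfolding matrix_vector_mul_assoc[symmetric] complex_vec_eq_iff[of "_ *v (_ *v w)"]
      Re_vec_shifted_mulv Im_vec_shifted_mulv smult Re_vec_cmat_mulv Im_vec_cmat_mulv outer_mulv
      A_def[symmetric] \<beta>_def[symmetric] u_def[symmetric] v_def[symmetric]
    by (simp add: matrix_vector_right_distrib matrix_vector_mult_diff_distrib matrix_vector_mult_scaleR
        algebra_simps power2_eq_square)
      (simp add: vec_eq_iff algebra_simps)
qed

lemma qep_eigenvector_identities:
  fixes H :: "real^'n^'n" and \<alpha> :: real
  assumes sym: "transpose H = H"
  defines "A \<equiv> shifted H \<alpha>"
  assumes re: "A *v (A *v u) + (2 * \<beta>) *\<^sub>R (A *v v) - \<beta>\<^sup>2 *\<^sub>R u = (c * (g \<bullet> u)) *\<^sub>R g"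
    and im: "A *v (A *v v) - (2 * \<beta>) *\<^sub>R (A *v u) - \<beta>\<^sup>2 *\<^sub>R v = (c * (g \<bullet> v)) *\<^sub>R g"
  shows "u \<bullet> (qep_matrix H g c \<alpha> *v u) + v \<bullet> (qep_matrix H g c \<alpha> *v v) = \<beta>\<^sup>2 * (u \<bullet> u + v \<bullet> v)"
    and "\<beta> * (u \<bullet> (A *v u) + v \<bullet> (A *v v)) = 0"
proof -
  have A_sym: "x \<bullet> (A *v y) = (A *v x) \<bullet> y" for x y
    using symmetric_inner_mulv[OF transpose_shifted[OF sym]] by (simp add: A_def)
  have "u \<bullet> (A *v (A *v u)) = (A *v u) \<bullet> (A *v u)" "v \<bullet> (A *v (A *v v)) = (A *v v) \<bullet> (A *v v)"
    "v \<bullet> (A *v (A *v u)) = (A *v u) \<bullet> (A *v v)" "u \<bullet> (A *v (A *v v)) = (A *v u) \<bullet> (A *v v)"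
    "u \<bullet> (A *v v) = (A *v u) \<bullet> v" "v \<bullet> (A *v u) = (A *v u) \<bullet> v"
    by (metis A_sym inner_commute)+
  note expand = inner_add_right inner_diff_right inner_scaleR_right this
  have "u \<bullet> (A *v (A *v u) + (2 * \<beta>) *\<^sub>R (A *v v) - \<beta>\<^sup>2 *\<^sub>R u)
      + v \<bullet> (A *v (A *v v) - (2 * \<beta>) *\<^sub>R (A *v u) - \<beta>\<^sup>2 *\<^sub>R v)
      = c * (g \<bullet> u)\<^sup>2 + c * (g \<bullet> v)\<^sup>2"
    unfolding re im by (simp add: power2_eq_square inner_commute)
  then show "u \<bullet> (qep_matrix H g c \<alpha> *v u) + v \<bullet> (qep_matrix H g c \<alpha> *v v) = \<beta>\<^sup>2 * (u \<bullet> u + v \<bullet> v)"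
    unfolding inner_qep_matrix[OF sym] A_def[symmetric] expand by (simp add: algebra_simps)
  have "v \<bullet> (A *v (A *v u) + (2 * \<beta>) *\<^sub>R (A *v v) - \<beta>\<^sup>2 *\<^sub>R u)
      - u \<bullet> (A *v (A *v v) - (2 * \<beta>) *\<^sub>R (A *v u) - \<beta>\<^sup>2 *\<^sub>R v) = 0"
    unfolding re im by (simp add: inner_commute)
  then show "\<beta> * (u \<bullet> (A *v u) + v \<bullet> (A *v v)) = 0"
    unfolding expand by (simp add: inner_commute[of u v] algebra_simps)
qed

lemma qep_eigenvalue_bounded_by_psd_pencil:
  fixes H :: "real^'n^'n"
  assumes sym: "transpose H = H" and "0 \<le> c"
    and psdA: "psd (shifted H l)" and psdM: "psd (qep_matrix H g c l)"
    and eq: "((cmat H - mat \<mu>) ** (cmat H - mat \<mu>)) *v w = complex_of_real c *s (cmat (outer g) *v w)"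
    and "w \<noteq> 0"
  shows "l \<le> Re \<mu>" and "Re \<mu> = l \<Longrightarrow> Im \<mu> = 0"
proof -
  define u v \<alpha> \<beta> where "u = Re_vec w" and "v = Im_vec w" and "\<alpha> = Re \<mu>" and "\<beta> = Im \<mu>"
  note re_im = eq[unfolded qep_equation_iff, folded u_def v_def \<alpha>_def \<beta>_def]
  have M_sum: "u \<bullet> (qep_matrix H g c \<alpha> *v u) + v \<bullet> (qep_matrix H g c \<alpha> *v v) = \<beta>\<^sup>2 * (u \<bullet> u + v \<bullet> v)"
    and A_sum: "\<beta> * (u \<bullet> (shifted H \<alpha> *v u) + v \<bullet> (shifted H \<alpha> *v v)) = 0"
    using qep_eigenvector_identities[OF sym re_im[THEN conjunct1] re_im[THEN conjunct2]] by blast+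
  have "u \<noteq> 0 \<or> v \<noteq> 0"
    using \<open>w \<noteq> 0\<close> by (auto simp: u_def v_def vec_eq_iff Re_vec_def Im_vec_def complex_eq_iff)
  hence a: "u \<bullet> u + v \<bullet> v > 0" by (auto simp: add_pos_nonneg add_nonneg_pos)
  have A_l: "0 \<le> u \<bullet> (shifted H l *v u)" "0 \<le> v \<bullet> (shifted H l *v v)" using psdA by (auto simp: psd_def)
  have A_shift: "u \<bullet> (shifted H \<alpha> *v u) + v \<bullet> (shifted H \<alpha> *v v)
      = u \<bullet> (shifted H l *v u) + v \<bullet> (shifted H l *v v) + (l - \<alpha>) * (u \<bullet> u + v \<bullet> v)"
    by (simp add: inner_shifted algebra_simps)
  show "l \<le> Re \<mu>"
  proof (cases "\<beta> = 0")
    case True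
    show ?thesis
    proof (rule ccontr)
      assume "\<not> l \<le> Re \<mu>"
      hence "(l - \<alpha>)\<^sup>2 * (u \<bullet> u + v \<bullet> v) > 0" using a by (simp add: \<alpha>_def)
      also have "\<dots> \<le> u \<bullet> (qep_matrix H g c \<alpha> *v u) + v \<bullet> (qep_matrix H g c \<alpha> *v v)"
        using psd_qep_matrix_below[OF sym psdA psdM, of \<alpha>] \<open>\<not> l \<le> Re \<mu>\<close>
        by (simp add: \<alpha>_def distrib_left add_mono)
      finally show False using M_sum True by simp
    qed
  next
    case False
    hence "u \<bullet> (shifted H \<alpha> *v u) + v \<bullet> (shifted H \<alpha> *v v) = 0" using A_sum by simp
    hence "(\<alpha> - l) * (u \<bullet> u + v \<bullet> v) = u \<bullet> (shifted H l *v u) + v \<bullet> (shifted H l *v v)"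
      using A_shift unfolding left_diff_distrib by linarith
    hence "0 \<le> (\<alpha> - l) * (u \<bullet> u + v \<bullet> v)" using A_l by simp
    with a show ?thesis by (simp add: \<alpha>_def zero_le_mult_iff)
  qed
  show "Im \<mu> = 0" if "Re \<mu> = l"
  proof (rule ccontr)
    assume "Im \<mu> \<noteq> 0"
    hence "u \<bullet> (shifted H l *v u) + v \<bullet> (shifted H l *v v) = 0"
      using A_sum A_shift that by (simp add: \<alpha>_def \<beta>_def)
    hence "shifted H l *v u = 0" "shifted H l *v v = 0"
      using A_l psd_form_eq_0_imp_mulv_eq_0[OF transpose_shifted[OF sym] psdA] by (metis add_nonneg_eq_0_iff)+
    hence "u \<bullet> (qep_matrix H g c l *v u) + v \<bullet> (qep_matrix H g c l *v v) \<le> 0"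
      using \<open>0 \<le> c\<close> by (simp add: inner_qep_matrix[OF sym]) (smt (verit) zero_le_mult_iff zero_le_power2)
    moreover have "\<beta>\<^sup>2 * (u \<bullet> u + v \<bullet> v) > 0" using a \<open>Im \<mu> \<noteq> 0\<close> by (simp add: \<beta>_def)
    ultimately show False using M_sum that by (simp add: \<alpha>_def)
  qed
qed

lemma pqep_feasible_iff:
  "pqep_feasible H g \<gamma> l \<longleftrightarrow> (\<exists>w. w \<noteq> 0 \<and> qep_matrix H g (1 / \<gamma>\<^sup>2) l *v w = 0)"
  by (simp add: pqep_feasible_def qep_matrix_mulv outer_mulv scalar_mult_eq_scaleR
      matrix_vector_mul_assoc[symmetric] flip: shifted_def)

lemma qep_eigenvalue_of_real:
  fixes H :: "real^'n^'n"
  assumes "w \<noteq> 0" and "qep_matrix H g (1 / \<gamma>\<^sup>2) l *v w = 0"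
  shows "qep_eigenvalue H g \<gamma> (complex_of_real l)"
proof -
  define cw :: "complex^'n" where "cw = (\<chi> i. complex_of_real (w $ i))"
  have "Re_vec cw = w" "Im_vec cw = 0" by (simp_all add: cw_def Re_vec_def Im_vec_def vec_eq_iff)
  then have "((cmat H - mat (complex_of_real l)) ** (cmat H - mat (complex_of_real l))) *v cw
      = complex_of_real (1 / \<gamma>\<^sup>2) *s (cmat (outer g) *v cw)"
    using assms(2) unfolding qep_equation_iff by (simp add: qep_matrix_mulv)
  moreover have "cw \<noteq> 0" using \<open>w \<noteq> 0\<close> by (auto simp: cw_def vec_eq_iff)
  ultimately show ?thesis unfolding qep_eigenvalue_def by blast
qed

theorem theorem2p7:
  fixes H :: "real^'n^'n" and g0 :: "real^'n" and \<gamma> :: real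
  assumes "transpose H = H" and "g0 \<noteq> 0" and "\<gamma> > 0"
  shows "\<exists>lams::real.
           qep_eigenvalue H g0 \<gamma> (complex_of_real lams)
         \<and> (\<forall>\<mu>. qep_eigenvalue H g0 \<gamma> \<mu> \<longrightarrow>
                 lams \<le> Re \<mu> \<and> (Re \<mu> = lams \<longrightarrow> \<mu> = complex_of_real lams))
         \<and> pqep_feasible H g0 \<gamma> lams
         \<and> (\<forall>lam. pqep_feasible H g0 \<gamma> lam \<longrightarrow> lams \<le> lam)"
proof -
  define c where "c = 1 / \<gamma>\<^sup>2"
  \<comment> \<open>This holds for every real gamma.\<close>
  have "0 \<le> c" by (simp add: c_def)
  obtain l w where psd: "psd (shifted H l)" "psd (qep_matrix H g0 c l)"
    and w: "w \<noteq> 0" "qep_matrix H g0 c l *v w = 0"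
    using exists_singular_psd_pencil[OF assms(1) \<open>0 \<le> c\<close>] by blast
  have leftmost: "l \<le> Re \<mu> \<and> (Re \<mu> = l \<longrightarrow> \<mu> = complex_of_real l)"
    if "qep_eigenvalue H g0 \<gamma> \<mu>" for \<mu>
    using that qep_eigenvalue_bounded_by_psd_pencil[OF assms(1) \<open>0 \<le> c\<close> psd]
    unfolding qep_eigenvalue_def c_def by (auto simp: complex_eq_iff)
  have "l \<le> lam" if "pqep_feasible H g0 \<gamma> lam" for lam
    using leftmost[OF qep_eigenvalue_of_real] that unfolding pqep_feasible_iff by fastforce
  moreover have "pqep_feasible H g0 \<gamma> l" using w unfolding pqep_feasible_iff c_def by blast
  ultimately show ?thesis using leftmost qep_eigenvalue_of_real w unfolding c_def by blast
qed

end
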